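(* Let $(X,\|\cdot\|)$ be a normed linear space over $\mathbb{R}$ or $\mathbb{C}$, and let $a,x_1,\dots,x_n\in X\setminus\{0\}$ satisfy $\|x_j-a\|\le\|a\|$ for each $j\in\{1,\dots,n\}$. Then for any $p_1,\dots,p_n\ge0$ with $\sum_{j=1}^n p_j=1$, $$\frac{\big\|\sum_{j=1}^n p_jx_j\big\|}{\sum_{j=1}^n p_j\|x_j\|}\ \ge\ \frac{\|a\|-\max_{1\le j\le n}\|x_j-a\|}{2\|a\|}\ (\ge0).$$ *)

theory Defs
  imports Complex_Main
begin

end

theory Submission
  imports Defs "HOL-Analysis.Analysis"
begin

(* Put s = \<Sum> p\<^sub>j x\<^sub>j and r = max \<parallel>x\<^sub>j - a\<parallel> \<le> \<parallel>a\<parallel>. Since the closed ball of radius r about a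
   is convex, \<parallel>s - a\<parallel> \<le> r and so \<parallel>s\<parallel> \<ge> \<parallel>a\<parallel> - r; on the other hand every \<parallel>x\<^sub>j\<parallel> \<le> \<parallel>a\<parallel> + r,
   so the denominator is at most \<parallel>a\<parallel> + r \<le> 2\<parallel>a\<parallel>. Hence the ratio is at least
   (\<parallel>a\<parallel> - r)/(\<parallel>a\<parallel> + r) \<ge> (\<parallel>a\<parallel> - r)/(2\<parallel>a\<parallel>). *)

lemma norm_convex_combination_diff_le:
  fixes x :: "'i \<Rightarrow> 'a :: real_normed_vector"
  assumes "finite I" "\<And>i. i \<in> I \<Longrightarrow> p i \<ge> 0" "sum p I = 1"
    and "\<And>i. i \<in> I \<Longrightarrow> norm (x i - a) \<le> r"
  shows "norm ((\<Sum>i\<in>I. p i *\<^sub>R x i) - a) \<le> r"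
proof -
  have "(\<Sum>i\<in>I. p i *\<^sub>R x i) \<in> cball a r"
    using assms by (intro convex_sum) (auto simp: dist_norm norm_minus_commute)
  then show ?thesis
    by (simp add: dist_norm norm_minus_commute)
qed

lemma norm_convex_combination_ge:
  fixes x :: "'i \<Rightarrow> 'a :: real_normed_vector"
  assumes "finite I" "\<And>i. i \<in> I \<Longrightarrow> p i \<ge> 0" "sum p I = 1"
    and "\<And>i. i \<in> I \<Longrightarrow> norm (x i - a) \<le> r"
  shows "norm a - r \<le> norm (\<Sum>i\<in>I. p i *\<^sub>R x i)"
proof -
  have "norm ((\<Sum>i\<in>I. p i *\<^sub>R x i) - a) \<le> r"
    using assms by (rule norm_convex_combination_diff_le)
  then show ?thesis
    using norm_triangle_ineq2[of a "\<Sum>i\<in>I. p i *\<^sub>R x i"] by (simp add: norm_minus_commute)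
qed

lemma convex_combination_norms_le:
  fixes x :: "'i \<Rightarrow> 'a :: real_normed_vector"
  assumes "\<And>i. i \<in> I \<Longrightarrow> p i \<ge> 0" "sum p I = 1"
    and "\<And>i. i \<in> I \<Longrightarrow> norm (x i - a) \<le> r"
  shows "(\<Sum>i\<in>I. p i * norm (x i)) \<le> norm a + r"
proof -
  have "(\<Sum>i\<in>I. p i * norm (x i)) \<le> (\<Sum>i\<in>I. p i * (norm a + r))"
  proof (rule sum_mono)
    fix i assume i: "i \<in> I"
    have "norm (x i) \<le> norm a + norm (x i - a)"
      using norm_triangle_ineq[of a "x i - a"] by simp
    also have "\<dots> \<le> norm a + r"
      using assms(3)[OF i] by simp
    finally show "p i * norm (x i) \<le> p i * (norm a + r)"
      using assms(1)[OF i] by (rule mult_left_mono)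
  qed
  also have "\<dots> = norm a + r"
    using assms(2) by (simp flip: sum_distrib_right)
  finally show ?thesis .
qed

lemma convex_combination_norms_pos:
  fixes x :: "'i \<Rightarrow> 'a :: real_normed_vector"
  assumes "finite I" "\<And>i. i \<in> I \<Longrightarrow> p i \<ge> 0" "sum p I = 1"
    and "\<And>i. i \<in> I \<Longrightarrow> x i \<noteq> 0"
  shows "(\<Sum>i\<in>I. p i * norm (x i)) > 0"
proof -
  obtain i where i: "i \<in> I" "p i > 0"
    using assms(2,3) by (metis less_eq_real_def sum.neutral zero_neq_one)
  have "0 < p i * norm (x i)"
    using i assms(4) by simp
  also have "\<dots> \<le> (\<Sum>i\<in>I. p i * norm (x i))"
    using assms(1,2) i(1) by (intro member_le_sum) auto
  finally show ?thesis .
qed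

lemma convex_combination_norm_ratio_ge:
  fixes x :: "'i \<Rightarrow> 'a :: real_normed_vector"
  assumes "finite I" "\<And>i. i \<in> I \<Longrightarrow> p i \<ge> 0" "sum p I = 1"
    and "\<And>i. i \<in> I \<Longrightarrow> x i \<noteq> 0"
    and "\<And>i. i \<in> I \<Longrightarrow> norm (x i - a) \<le> r"
  shows "(norm a - r) / (norm a + r)
           \<le> norm (\<Sum>i\<in>I. p i *\<^sub>R x i) / (\<Sum>i\<in>I. p i * norm (x i))"
proof (rule frac_le)
  show "norm a - r \<le> norm (\<Sum>i\<in>I. p i *\<^sub>R x i)"
    using assms(1-3,5) by (rule norm_convex_combination_ge)
  show "0 < (\<Sum>i\<in>I. p i * norm (x i))"
    using assms(1-4) by (rule convex_combination_norms_pos)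
  show "(\<Sum>i\<in>I. p i * norm (x i)) \<le> norm a + r"
    using assms(2,3,5) by (rule convex_combination_norms_le)
qed simp

theorem proposition2p2:
  fixes a :: "'a :: real_normed_vector"
    and x :: "nat \<Rightarrow> 'a"
    and p :: "nat \<Rightarrow> real"
    and n :: nat
  assumes "a \<noteq> 0"
    and "\<And>j. j \<in> {1..n} \<Longrightarrow> x j \<noteq> 0"
    and "\<And>j. j \<in> {1..n} \<Longrightarrow> norm (x j - a) \<le> norm a"
    and "\<And>j. j \<in> {1..n} \<Longrightarrow> p j \<ge> 0"
    and "(\<Sum>j=1..n. p j) = 1"
  shows "norm (\<Sum>j=1..n. p j *\<^sub>R x j) / (\<Sum>j=1..n. p j * norm (x j))
           \<ge> (norm a - (MAX j\<in>{1..n}. norm (x j - a))) / (2 * norm a)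
         \<and> (norm a - (MAX j\<in>{1..n}. norm (x j - a))) / (2 * norm a) \<ge> 0"
proof -
  define r where "r = (MAX j\<in>{1..n}. norm (x j - a))"
  have "{1..n} \<noteq> {}"
    using assms(5) by (cases n) auto
  then have r_le: "r \<le> norm a" and r_nonneg: "r \<ge> 0"
    using assms(3) by (auto simp: r_def Max_le_iff Max_ge_iff)
  have "(norm a - r) / (2 * norm a) \<le> (norm a - r) / (norm a + r)"
    using r_le r_nonneg assms(1) by (intro frac_le) (auto simp: add_pos_nonneg)
  also have "\<dots> \<le> norm (\<Sum>j=1..n. p j *\<^sub>R x j) / (\<Sum>j=1..n. p j * norm (x j))"
    using assms(2,4,5) by (intro convex_combination_norm_ratio_ge) (auto simp: r_def)
  finally show ?thesis
    using r_le by (simp add: r_def)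
qed

end
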